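(* Let $n$ robots, at most $f$ of them Byzantine, be placed at two distinct points $A<B$ of the real line: $p\ge 1$ robots at $A$ and $q \ge 1$ robots at $B$, with $p+q=n$. Suppose the robots run a deterministic cautious algorithm that solves Byzantine convergence with up to $f$ Byzantine robots in the ATOM model under a fully asynchronous scheduler. If $|p-q|\le f$, then: - when a correct robot at $A$ is activated, its computed destination lies in $(A,B]$; - when a correct robot at $B$ is activated, its computed destination lies in $[A,B)$.
   Context: Model: robots on the real line in the ATOM model (each activated robot performs a full Look–Compute–Move cycle atomically). Robots are anonymous (same deterministic program), oblivious, have no common orientation, and have unlimited visibility with strong multiplicity detection (an observation returns the multiset of all positions). Byzantine robots behave arbitrarily, with positions chosen by the adversary. A fully asynchronous scheduler only guarantees that each robot is activated infinitely often. Byzantine convergence: for every $\epsilon>0$ there is a time after which all correct robots are pairwise within distance $\epsilon$. Cautious algorithm: every computed destination of a correct robot lies in the range of the correct robots' positions in its last observation. In addition, whenever the correct robots are not colocated, some correct robot later has destination different from its position. *)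

theory Defs
  imports Complex_Main "HOL-Library.Multiset"
begin

text \<open>An algorithm maps an observation (multiset of positions,
expressed in the observing robot's local frame: origin at the robot's own position,
orientation s in {-1,1}) to a destination in that local frame.\<close>

type_synonym algo = "real multiset \<Rightarrow> real"

definition observe :: "nat \<Rightarrow> (nat \<Rightarrow> real) \<Rightarrow> real multiset" where
  "observe n c = image_mset c (mset_set {..<n})"

definition local_view :: "real \<Rightarrow> real \<Rightarrow> real multiset \<Rightarrow> real multiset" where
  "local_view s x M = image_mset (\<lambda>y. s * (y - x)) M"

definition dest :: "algo \<Rightarrow> real \<Rightarrow> real \<Rightarrow> real multiset \<Rightarrow> real" where
  "dest alg s x M = x + s * alg (local_view s x M)"

definition correct :: "nat \<Rightarrow> nat set \<Rightarrow> nat set" where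
  "correct n Byz = {i. i < n \<and> i \<notin> Byz}"

text \<open>ATOM execution under a fully asynchronous (fair) scheduler: at each step t the
subset act t of robots is activated and each activated correct robot atomically observes
and moves to its computed destination; Byzantine robots' positions are arbitrary.
orient i is the (fixed) orientation of robot i's local frame.\<close>
definition execution :: "algo \<Rightarrow> nat \<Rightarrow> nat set \<Rightarrow> (nat \<Rightarrow> real) \<Rightarrow> (nat \<Rightarrow> nat set)
    \<Rightarrow> (nat \<Rightarrow> nat \<Rightarrow> real) \<Rightarrow> bool" where
  "execution alg n Byz orient act C \<longleftrightarrow>
     (\<forall>i<n. orient i = 1 \<or> orient i = -1) \<and>
     (\<forall>i<n. \<exists>\<^sub>\<infinity>t. i \<in> act t) \<and>
     (\<forall>t. \<forall>i \<in> correct n Byz.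
        C (Suc t) i = (if i \<in> act t then dest alg (orient i) (C t i) (observe n (C t))
                       else C t i))"

definition admissible :: "nat \<Rightarrow> nat \<Rightarrow> nat set \<Rightarrow> bool" where
  "admissible n f Byz \<longleftrightarrow> Byz \<subseteq> {..<n} \<and> card Byz \<le> f"

definition converges :: "nat \<Rightarrow> nat set \<Rightarrow> (nat \<Rightarrow> nat \<Rightarrow> real) \<Rightarrow> bool" where
  "converges n Byz C \<longleftrightarrow>
     (\<forall>\<epsilon>>0. \<exists>T. \<forall>t\<ge>T. \<forall>i\<in>correct n Byz. \<forall>j\<in>correct n Byz. \<bar>C t i - C t j\<bar> \<le> \<epsilon>)"

definition solves_byz_convergence :: "algo \<Rightarrow> nat \<Rightarrow> nat \<Rightarrow> bool" where
  "solves_byz_convergence alg n f \<longleftrightarrow>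
     (\<forall>Byz orient act C. admissible n f Byz \<and> execution alg n Byz orient act C
        \<longrightarrow> converges n Byz C)"

definition cautious :: "algo \<Rightarrow> nat \<Rightarrow> nat \<Rightarrow> bool" where
  "cautious alg n f \<longleftrightarrow>
     (\<forall>Byz orient act C. admissible n f Byz \<and> execution alg n Byz orient act C \<longrightarrow>
        (\<forall>t. \<forall>i \<in> act t \<inter> correct n Byz.
            \<exists>j\<in>correct n Byz. \<exists>k\<in>correct n Byz.
              C t j \<le> dest alg (orient i) (C t i) (observe n (C t)) \<and>
              dest alg (orient i) (C t i) (observe n (C t)) \<le> C t k) \<and>
        (\<forall>t. (\<exists>j\<in>correct n Byz. \<exists>k\<in>correct n Byz. C t j \<noteq> C t k) \<longrightarrow>
            (\<exists>t'\<ge>t. \<exists>i \<in> act t' \<inter> correct n Byz.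
               dest alg (orient i) (C t' i) (observe n (C t')) \<noteq> C t' i)))"

end

theory Submission
  imports Defs "HOL-Library.Infinite_Set"
begin

text \<open>Running the fault-free synchronous execution from the configuration shows, by cautiousness,
that a robot at A moves into [A, B]. Suppose it stayed at A. Declare |p - q| \<le> f robots
Byzantine so that min p q correct robots remain on each side. By switching the Byzantine
robots between A and B at every step, the adversary makes every activated correct robot, at A
or at B, see in its own frame exactly the view from A of the initial configuration (at B up to
the reflection x \<mapsto> A + B - x and an opposite orientation). So no correct robot ever
moves, although they occupy two distinct points, contradicting the liveness clause of
cautiousness. The statement for B follows by the same reflection.\<close>

lemma observe_indicator:
  assumes "T \<subseteq> {..<n}"
  shows "observe n (\<lambda>i. if i \<in> T then B else A)
           = replicate_mset (n - card T) A + replicate_mset (card T) B"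
proof -
  let ?c = "\<lambda>i. if i \<in> T then B else A"
  have fin: "finite T" using assms finite_subset by blast
  have "mset_set {..<n} = mset_set ({..<n} - T) + mset_set T"
    using assms fin by (subst mset_set_Union[symmetric]) (auto simp: Un_absorb2)
  moreover have "image_mset ?c (mset_set ({..<n} - T)) = image_mset (\<lambda>_. A) (mset_set ({..<n} - T))"
    by (rule image_mset_cong) simp
  moreover have "image_mset ?c (mset_set T) = image_mset (\<lambda>_. B) (mset_set T)"
    using fin by (intro image_mset_cong) simp
  ultimately show ?thesis
    using assms fin by (simp add: observe_def image_mset_const_eq card_Diff_subset)
qed

lemma dest_reflect:
  "dest alg (- s) (c - x) (image_mset (\<lambda>y. c - y) M) = c - dest alg s x M"
proof -
  have "local_view (- s) (c - x) (image_mset (\<lambda>y. c - y) M) = local_view s x M"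
    by (simp add: local_view_def multiset.map_comp o_def algebra_simps)
  then show ?thesis by (simp add: dest_def)
qed

primrec run :: "algo \<Rightarrow> nat \<Rightarrow> (nat \<Rightarrow> real) \<Rightarrow> (nat \<Rightarrow> nat set) \<Rightarrow> (nat \<Rightarrow> real)
    \<Rightarrow> nat \<Rightarrow> nat \<Rightarrow> real" where
  "run alg n orient act c 0 = c"
| "run alg n orient act c (Suc t) = (\<lambda>i.
     if i \<in> act t then dest alg (orient i) (run alg n orient act c t i) (observe n (run alg n orient act c t))
     else run alg n orient act c t i)"

lemma execution_run:
  assumes "\<forall>i<n. orient i = 1 \<or> orient i = -1" and "\<forall>i<n. \<exists>\<^sub>\<infinity>t. i \<in> act t"
  shows "execution alg n Byz orient act (run alg n orient act c)"
  using assms by (simp add: execution_def)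

lemma cautious_safety:
  assumes "cautious alg n f" and "admissible n f Byz" and "execution alg n Byz orient act C"
    and "i \<in> act t" and "i \<in> correct n Byz"
  obtains j k where "j \<in> correct n Byz" "k \<in> correct n Byz"
    "C t j \<le> dest alg (orient i) (C t i) (observe n (C t))"
    "dest alg (orient i) (C t i) (observe n (C t)) \<le> C t k"
proof -
  have "\<forall>t. \<forall>i \<in> act t \<inter> correct n Byz. \<exists>j\<in>correct n Byz. \<exists>k\<in>correct n Byz.
          C t j \<le> dest alg (orient i) (C t i) (observe n (C t)) \<and>
          dest alg (orient i) (C t i) (observe n (C t)) \<le> C t k"
    using assms(1-3) unfolding cautious_def by blast
  with assms(4,5) that show ?thesis by blast
qed

lemma cautious_liveness:
  assumes "cautious alg n f" and "admissible n f Byz" and "execution alg n Byz orient act C"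
    and "j \<in> correct n Byz" and "k \<in> correct n Byz" and "C t j \<noteq> C t k"
  shows "\<exists>t'\<ge>t. \<exists>i \<in> act t' \<inter> correct n Byz. dest alg (orient i) (C t' i) (observe n (C t')) \<noteq> C t' i"
proof -
  have "\<forall>t. (\<exists>j\<in>correct n Byz. \<exists>k\<in>correct n Byz. C t j \<noteq> C t k) \<longrightarrow>
          (\<exists>t'\<ge>t. \<exists>i \<in> act t' \<inter> correct n Byz. dest alg (orient i) (C t' i) (observe n (C t')) \<noteq> C t' i)"
    using assms(1-3) unfolding cautious_def by blast
  with assms(4-6) show ?thesis by blast
qed

lemma cautious_dest_in_range:
  assumes "cautious alg n f" and "i < n" and "s = 1 \<or> s = -1"
  obtains j k where "j < n" "k < n" "c j \<le> dest alg s (c i) (observe n c)" "dest alg s (c i) (observe n c) \<le> c k"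
proof -
  let ?act = "\<lambda>_. {..<n}"
  define R where "R = run alg n (\<lambda>_. s) ?act c"
  have "admissible n f {}" by (simp add: admissible_def)
  moreover have "execution alg n {} (\<lambda>_. s) ?act R"
    unfolding R_def using assms(3) by (intro execution_run) (auto simp: INFM_nat)
  moreover have "i \<in> ?act 0" "i \<in> correct n {}" using assms(2) by (auto simp: correct_def)
  ultimately obtain j k where "j \<in> correct n {}" "k \<in> correct n {}"
    "R 0 j \<le> dest alg s (R 0 i) (observe n (R 0))" "dest alg s (R 0 i) (observe n (R 0)) \<le> R 0 k"
    by (rule cautious_safety[OF assms(1)])
  then show ?thesis using that by (simp add: R_def correct_def)
qed

lemma cautious_leaves_point:
  assumes "cautious alg n f" and "A \<noteq> B" and "1 \<le> p" and "1 \<le> q" and "p + q = n"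
    and "\<bar>int p - int q\<bar> \<le> int f" and "s = 1 \<or> s = -1"
  shows "dest alg s A (replicate_mset p A + replicate_mset q B) \<noteq> A"
proof
  let ?M = "replicate_mset p A + replicate_mset q B"
  let ?M' = "replicate_mset q A + replicate_mset p B"
  assume stay: "dest alg s A ?M = A"
  have stay': "dest alg (- s) B ?M' = B"
    using dest_reflect[of alg s "A + B" A ?M] stay by (simp add: add.commute)
  \<comment> \<open>Robots below p start at A, the others at B. Even steps activate the robots at A in c,
    odd steps those at B in c', where the Byzantine robots have switched sides.\<close>
  define m where "m = min p q"
  define Byz where "Byz = {m..<p} \<union> {p + m..<n}"
  define c where "c = (\<lambda>i. if i \<in> {p..<n} then B else A)"
  define c' where "c' = (\<lambda>i. if i \<in> {m..<p + m} then B else A)"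
  define C where "C = (\<lambda>t::nat. if even t then c else c')"
  define act where "act = (\<lambda>t::nat. if even t then {..<p} else {p..<n})"
  define orient where "orient = (\<lambda>i. if i < p then s else - s)"
  have m: "1 \<le> m" "m \<le> p" "m \<le> q" using assms(3,4) by (auto simp: m_def)
  have correct: "correct n Byz = {..<m} \<union> {p..<p + m}"
    using m assms(5) by (auto simp: correct_def Byz_def)
  have "{p..<n} \<subseteq> {..<n}" "{m..<p + m} \<subseteq> {..<n}" using m assms(5) by auto
  then have observe_c: "observe n c = ?M" and observe_c': "observe n c' = ?M'"
    unfolding c_def c'_def using m assms(5) by (auto dest: observe_indicator)
  have C_correct: "C t i = c i" if "i \<in> correct n Byz" for t i
    using that m assms(5) by (auto simp: correct C_def c_def c'_def)
  have stays: "dest alg (orient i) (C t i) (observe n (C t)) = C t i"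
    if "i \<in> act t" "i \<in> correct n Byz" for t i
    using that m stay stay' observe_c observe_c'
    by (cases "even t") (auto simp: act_def correct orient_def C_def c_def c'_def)
  have "execution alg n Byz orient act C"
    unfolding execution_def
  proof (intro conjI allI impI ballI)
    fix i assume "i < n"
    then have "i \<in> act (2 * k + (if i < p then 0 else 1))" for k
      by (auto simp: act_def)
    then show "\<exists>\<^sub>\<infinity>t. i \<in> act t"
      unfolding INFM_nat_le by (metis le_add1 mult_2 add.assoc)
  next
    fix t i assume "i \<in> correct n Byz"
    then show "C (Suc t) i = (if i \<in> act t then dest alg (orient i) (C t i) (observe n (C t)) else C t i)"
      using stays C_correct by simp
  qed (use assms(7) in \<open>auto simp: orient_def\<close>)
  moreover have "admissible n f Byz"
  proof -
    have "card Byz = (p - m) + (q - m)"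
      unfolding Byz_def using m assms(5) by (subst card_Un_disjoint) auto
    then show ?thesis
      using assms(5,6) by (auto simp: admissible_def Byz_def m_def min_def)
  qed
  moreover have "0 \<in> correct n Byz" "p \<in> correct n Byz" using m by (auto simp: correct)
  ultimately have "C 0 0 = C 0 p"
    using cautious_liveness[OF assms(1)] stays by blast
  with assms(2-5) show False by (simp add: C_def c_def)
qed

lemma cautious_dest_from_left_point:
  assumes "cautious alg n f" and "A < B" and "1 \<le> p" and "1 \<le> q" and "p + q = n"
    and "\<bar>int p - int q\<bar> \<le> int f" and "s = 1 \<or> s = -1"
  shows "dest alg s A (replicate_mset p A + replicate_mset q B) \<in> {A<..B}"
proof -
  let ?M = "replicate_mset p A + replicate_mset q B"
  let ?c = "\<lambda>i. if i \<in> {p..<n} then B else A"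
  have "0 < n" using assms(3,5) by linarith
  then obtain j k where "j < n" "k < n"
    "?c j \<le> dest alg s (?c 0) (observe n ?c)" "dest alg s (?c 0) (observe n ?c) \<le> ?c k"
    by (rule cautious_dest_in_range[OF assms(1) _ assms(7)])
  moreover have "observe n ?c = ?M"
    using observe_indicator[of "{p..<n}" n B A] assms(5) by fastforce
  moreover have "?c 0 = A" using assms(3) by simp
  moreover have "A \<le> ?c j" "?c k \<le> B" using assms(2) by auto
  ultimately have "A \<le> dest alg s A ?M" "dest alg s A ?M \<le> B"
    by auto
  moreover have "dest alg s A ?M \<noteq> A"
    using assms(2) by (intro cautious_leaves_point[OF assms(1) _ assms(3-7)]) simp
  ultimately show ?thesis by auto
qed

theorem lemma5:
  fixes alg :: algo and n f p q :: nat and A B :: real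
  assumes "A < B" and "p \<ge> 1" and "q \<ge> 1" and "p + q = n"
    and "\<bar>int p - int q\<bar> \<le> int f"
    and "cautious alg n f" and "solves_byz_convergence alg n f"
  shows "(\<forall>s\<in>{1, -1}. dest alg s A (replicate_mset p A + replicate_mset q B) \<in> {A<..B}) \<and>
         (\<forall>s\<in>{1, -1}. dest alg s B (replicate_mset p A + replicate_mset q B) \<in> {A..<B})"
proof (intro conjI ballI)
  fix s :: real assume "s \<in> {1, -1}"
  then show "dest alg s A (replicate_mset p A + replicate_mset q B) \<in> {A<..B}"
    using cautious_dest_from_left_point[OF assms(6,1-5)] by auto
next
  fix s :: real assume "s \<in> {1, -1}"
  then have "dest alg (- s) A (replicate_mset q A + replicate_mset p B) \<in> {A<..B}"
    using cautious_dest_from_left_point[of alg n f A B q p "- s"] assms by auto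
  moreover have "dest alg (- s) A (replicate_mset q A + replicate_mset p B)
                   = A + B - dest alg s B (replicate_mset p A + replicate_mset q B)"
    using dest_reflect[of alg s "A + B" B "replicate_mset p A + replicate_mset q B"]
    by (simp add: add.commute)
  ultimately show "dest alg s B (replicate_mset p A + replicate_mset q B) \<in> {A..<B}" by auto
qed

end
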